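(* Let $\beta>1/2$ and let $X$ be a random variable with density $f_\beta(x)=C_\beta(1+x^2)^{-\beta}$, $x\in\mathbb R$. Then for every smooth $\phi:\mathbb R\to\mathbb R$ such that $\phi(X)$ has finite variance, $$\mathrm{Var}[\phi(X)]\le \frac{1}{\rho(\beta)}\,E\big\{(1+X^2)[\phi'(X)]^2\big\},\qquad \rho(\beta)=\begin{cases}(\beta-\tfrac12)^2, & \tfrac12<\beta\le\tfrac32,\\ 2(\beta-1), & \beta>\tfrac32.\end{cases}$$
   Context: $C_\beta>0$ is the normalizing constant making $f_\beta$ a probability density on $\mathbb R$. $\mathrm{Var}[\phi(X)]=E[\phi(X)^2]-(E[\phi(X)])^2$. *)

theory Defs
  imports "HOL-Probability.Probability"
begin

definition C_beta :: "real \<Rightarrow> real" where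
  "C_beta \<beta> = 1 / (\<integral>x. (1 + x\<^sup>2) powr (- \<beta>) \<partial>lborel)"

definition f_beta :: "real \<Rightarrow> real \<Rightarrow> real" where
  "f_beta \<beta> x = C_beta \<beta> * (1 + x\<^sup>2) powr (- \<beta>)"

definition rho :: "real \<Rightarrow> real" where
  "rho \<beta> = (if \<beta> \<le> 3/2 then (\<beta> - 1/2)\<^sup>2 else 2 * (\<beta> - 1))"

definition smooth_fun :: "(real \<Rightarrow> real) \<Rightarrow> bool" where
  "smooth_fun \<phi> \<longleftrightarrow> (\<forall>n x. ((deriv ^^ n) \<phi>) differentiable (at x))"

end

theory Submission
  imports Defs
begin

text \<open>
  Since \<open>Var[\<phi>(X)] \<le> E[(\<phi>(X) - \<phi>(0))\<^sup>2]\<close>, it suffices to prove the weighted Hardy inequality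
  \<open>\<rho>(\<beta>) \<integral> P f\<^sup>2 \<le> \<integral> (1 + x\<^sup>2) P f'\<^sup>2\<close> with \<open>P x = (1 + x\<^sup>2) powr -\<beta>\<close> for \<open>f\<close> vanishing at \<open>0\<close>.
  On \<open>[0, R]\<close> it follows by integrating the derivative of the nonnegative potential
  \<open>G x = (1 + a x\<^sup>2) P x f(x)\<^sup>2 / x\<close>: the difference of the two integrands minus \<open>G'\<close> is \<open>P\<close> times a sum of
  squares, provided \<open>(1 + a x\<^sup>2)(2\<beta> + 1 - a) \<ge> (\<rho> + 2a)(1 + x\<^sup>2)\<close>, which holds for
  \<open>a = \<beta> - 1/2\<close> if \<open>\<beta> \<le> 3/2\<close> and for \<open>a = 1\<close> otherwise.  Reflection gives \<open>[-R, R]\<close>, and monotone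
  convergence the whole line.
\<close>

lemma rho_pos: "\<beta> > 1/2 \<Longrightarrow> rho \<beta> > 0"
  unfolding rho_def by auto

lemma rho_admissible:
  fixes \<beta> x :: real
  assumes "\<beta> > 1/2"
  defines "a \<equiv> (if \<beta> \<le> 3/2 then \<beta> - 1/2 else 1)"
  shows "(rho \<beta> + 2*a) * (1 + x\<^sup>2) \<le> (1 + a*x\<^sup>2) * (2*\<beta> + 1 - a)"
proof (cases "\<beta> \<le> 3/2")
  case True
  have "(1 + a*x\<^sup>2) * (2*\<beta> + 1 - a) - (rho \<beta> + 2*a) * (1 + x\<^sup>2) = 9/4 - \<beta>\<^sup>2"
    using True unfolding a_def rho_def by (simp add: field_simps power2_eq_square)
  moreover have "\<beta>\<^sup>2 \<le> (3/2)\<^sup>2"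
    using True assms by (intro power_mono) auto
  ultimately show ?thesis by (simp add: power2_eq_square)
next
  case False
  then show ?thesis unfolding a_def rho_def by (simp add: algebra_simps)
qed

text \<open>
  The pointwise inequality behind the Hardy inequality: \<open>d\<close> stands for \<open>f'(x)\<close>, and the subtracted
  term is the derivative of \<open>(1 + a x\<^sup>2) P f\<^sup>2 / x\<close> when \<open>P' = -2 b x P / w\<close>.
\<close>
lemma hardy_integrand_ge_potential_deriv:
  fixes x w P f d a b c :: real
  assumes x: "x > 0" and w: "w = 1 + x\<^sup>2" and P: "P > 0"
    and admissible: "(c + 2*a) * w \<le> (1 + a*x\<^sup>2) * (2*b + 1 - a)"
  shows "((2*a*x*P + (1 + a*x\<^sup>2) * (-2*b*x*P/w)) * f\<^sup>2 + (1 + a*x\<^sup>2) * P * (2*f*d)) / x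
           - (1 + a*x\<^sup>2) * P * f\<^sup>2 / x\<^sup>2
         \<le> w*P*d\<^sup>2 - c*P*f\<^sup>2"
proof -
  have w_pos: "w > 0" using w by (simp add: add_pos_nonneg)
  define Q where "Q = (1 + a*x\<^sup>2) * (2*b + 1 - a) - (c + 2*a) * w"
  have "w*P*d\<^sup>2 - c*P*f\<^sup>2 - (((2*a*x*P + (1 + a*x\<^sup>2) * (-2*b*x*P/w)) * f\<^sup>2
          + (1 + a*x\<^sup>2) * P * (2*f*d)) / x - (1 + a*x\<^sup>2) * P * f\<^sup>2 / x\<^sup>2)
        = P / (w*x\<^sup>2) * ((w*x*d - (1 + a*x\<^sup>2) * f)\<^sup>2 + f\<^sup>2 * x\<^sup>2 * Q)"
    using x w_pos unfolding Q_def
    apply (simp add: field_simps)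
    apply (simp add: w power2_eq_square)
    apply algebra
    done
  moreover have "0 \<le> P / (w*x\<^sup>2) * ((w*x*d - (1 + a*x\<^sup>2) * f)\<^sup>2 + f\<^sup>2 * x\<^sup>2 * Q)"
    using x w_pos P admissible unfolding Q_def
    by (intro mult_nonneg_nonneg add_nonneg_nonneg) auto
  ultimately show ?thesis by linarith
qed

lemma isCont_mult_square_div_at_0:
  fixes f g :: "real \<Rightarrow> real"
  assumes f: "(f has_real_derivative f') (at 0)" and f0: "f 0 = 0" and g: "isCont g 0"
  shows "isCont (\<lambda>x. g x * (f x)\<^sup>2 / x) 0"
proof -
  have "((\<lambda>x. f x / x) \<longlongrightarrow> f') (at 0)"
    using f f0 by (simp add: has_field_derivative_iff)
  moreover have "((\<lambda>x. g x * f x) \<longlongrightarrow> g 0 * f 0) (at 0)"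
    using g DERIV_isCont[OF f] by (intro tendsto_mult) (auto simp: isCont_def)
  ultimately have "((\<lambda>x. (g x * f x) * (f x / x)) \<longlongrightarrow> 0) (at 0)"
    using f0 tendsto_mult by fastforce
  moreover have "(\<lambda>x. (g x * f x) * (f x / x)) = (\<lambda>x. g x * (f x)\<^sup>2 / x)"
    by (simp add: fun_eq_iff power2_eq_square)
  ultimately show ?thesis
    by (simp add: isCont_def)
qed

lemma weighted_hardy_half_interval:
  fixes f f' :: "real \<Rightarrow> real" and \<beta> R :: real
  assumes \<beta>: "\<beta> > 1/2" and R: "0 \<le> R"
    and f: "\<And>x. (f has_real_derivative f' x) (at x)"
    and f'_cont: "continuous_on UNIV f'"
    and f0: "f 0 = 0"
  shows "integral {0..R} (\<lambda>x. rho \<beta> * ((1 + x\<^sup>2) powr (-\<beta>) * (f x)\<^sup>2))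
       \<le> integral {0..R} (\<lambda>x. (1 + x\<^sup>2) * (1 + x\<^sup>2) powr (-\<beta>) * (f' x)\<^sup>2)"
    (is "integral _ ?lhs \<le> integral _ ?rhs")
proof -
  define a where "a = (if \<beta> \<le> 3/2 then \<beta> - 1/2 else 1)"
  define P where "P x = (1 + x\<^sup>2) powr (-\<beta>)" for x :: real
  define G where "G x = (1 + a*x\<^sup>2) * P x * (f x)\<^sup>2 / x" for x
  define G' where "G' x = ((2*a*x*P x + (1 + a*x\<^sup>2) * (-2*\<beta>*x*P x/(1 + x\<^sup>2))) * (f x)\<^sup>2
    + (1 + a*x\<^sup>2) * P x * (2 * f x * f' x)) / x - (1 + a*x\<^sup>2) * P x * (f x)\<^sup>2 / x\<^sup>2" for x
  have w_pos: "0 < 1 + x\<^sup>2" for x :: real by (simp add: add_pos_nonneg)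
  have P_pos: "P x > 0" for x unfolding P_def using w_pos[of x] by simp
  have P_deriv: "(P has_real_derivative (-2*\<beta>*x*P x/(1 + x\<^sup>2))) (at x)" for x
  proof -
    have "((\<lambda>x. (1 + x\<^sup>2) powr (-\<beta>)) has_real_derivative
            (-\<beta>) * (1 + x\<^sup>2) powr (-\<beta> - of_nat 1) * (2*x)) (at x)"
      by (rule DERIV_fun_powr) (auto intro!: derivative_eq_intros simp: w_pos)
    moreover have "(1 + x\<^sup>2) powr (-\<beta> - of_nat 1) = P x / (1 + x\<^sup>2)"
      unfolding P_def using w_pos[of x] by (simp add: powr_diff)
    ultimately show ?thesis unfolding P_def[abs_def] by (simp add: field_simps)
  qed
  have G_deriv: "(G has_real_derivative G' x) (at x)" if "x \<noteq> 0" for x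
    unfolding G_def[abs_def] G'_def
    by (rule DERIV_cong, (rule derivative_intros P_deriv f)+)
       (use that in \<open>simp_all add: field_simps power2_eq_square\<close>)
  have G_cont: "continuous_on {0..R} G"
  proof (intro continuous_at_imp_continuous_on ballI)
    fix x
    show "isCont G x"
    proof (cases "x = 0")
      case True
      have "isCont (\<lambda>x. (1 + a*x\<^sup>2) * P x) 0"
        using DERIV_isCont[OF P_deriv] by (intro continuous_intros) auto
      then show ?thesis
        unfolding True G_def[abs_def] by (rule isCont_mult_square_div_at_0[OF f f0])
    qed (use G_deriv DERIV_isCont in auto)
  qed
  have G_ftc: "(G' has_integral (G R - G 0)) {0..R}"
    using R G_cont
    by (intro fundamental_theorem_of_calculus_interior)
       (auto simp: has_real_derivative_iff_has_vector_derivative[symmetric] intro!: G_deriv)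
  have integrable: "?lhs integrable_on {0..R}" "?rhs integrable_on {0..R}"
    using f'_cont DERIV_isCont[OF P_deriv] DERIV_isCont[OF f] unfolding P_def[symmetric]
    by (auto intro!: integrable_continuous_interval continuous_at_imp_continuous_on continuous_intros
        simp: continuous_on_eq_continuous_at)
  have "((\<lambda>x. ?rhs x - ?lhs x - G' x) has_integral
          (integral {0..R} ?rhs - integral {0..R} ?lhs - (G R - G 0))) {0..R}"
    by (intro has_integral_diff G_ftc integrable_integral integrable)
  moreover have "0 \<le> ?rhs x - ?lhs x - G' x" if "x \<in> {0..R}" for x
  proof (cases "x = 0")
    case True
    then show ?thesis using f0 by (simp add: G'_def add_pos_nonneg)
  next
    case False
    with that have "x > 0" by auto
    from hardy_integrand_ge_potential_deriv[OF this refl P_pos rho_admissible[OF \<beta>]]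
    show ?thesis unfolding G'_def P_def a_def by (simp add: mult.assoc)
  qed
  ultimately have "0 \<le> integral {0..R} ?rhs - integral {0..R} ?lhs - (G R - G 0)"
    by (rule has_integral_nonneg) blast
  moreover have "G 0 = 0" "G R \<ge> 0"
    using R P_pos[of R] \<beta> unfolding G_def a_def by auto
  ultimately show ?thesis by simp
qed

lemma weighted_hardy_interval:
  fixes f f' :: "real \<Rightarrow> real" and \<beta> R :: real
  assumes \<beta>: "\<beta> > 1/2" and R: "0 \<le> R"
    and f: "\<And>x. (f has_real_derivative f' x) (at x)"
    and f'_cont: "continuous_on UNIV f'"
    and f0: "f 0 = 0"
  shows "integral {-R..R} (\<lambda>x. rho \<beta> * ((1 + x\<^sup>2) powr (-\<beta>) * (f x)\<^sup>2))
       \<le> integral {-R..R} (\<lambda>x. (1 + x\<^sup>2) * (1 + x\<^sup>2) powr (-\<beta>) * (f' x)\<^sup>2)"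
proof -
  define lhs where "lhs f x = rho \<beta> * ((1 + x\<^sup>2) powr (-\<beta>) * (f x)\<^sup>2)" for f :: "real \<Rightarrow> real" and x
  define rhs where "rhs f' x = (1 + x\<^sup>2) * (1 + x\<^sup>2) powr (-\<beta>) * (f' x)\<^sup>2" for f' :: "real \<Rightarrow> real" and x
  have right: "integral {0..R} (lhs f) \<le> integral {0..R} (rhs f')"
    unfolding lhs_def rhs_def by (rule weighted_hardy_half_interval[OF \<beta> R f f'_cont f0])
  have f_reflect: "((\<lambda>x. f (-x)) has_real_derivative - f' (-x)) (at x)" for x
    using DERIV_chain2[where g=uminus, OF f[of "-x"] DERIV_minus[OF DERIV_ident]] by simp
  have "integral {0..R} (lhs (\<lambda>x. f (-x))) \<le> integral {0..R} (rhs (\<lambda>x. - f' (-x)))"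
    unfolding lhs_def rhs_def
    by (rule weighted_hardy_half_interval[OF \<beta> R f_reflect])
       (auto intro!: continuous_intros continuous_on_compose2[OF f'_cont] simp: f0)
  moreover have "lhs (\<lambda>x. f (-x)) = (\<lambda>x. lhs f (-x))" "rhs (\<lambda>x. - f' (-x)) = (\<lambda>x. rhs f' (-x))"
    by (simp_all add: fun_eq_iff lhs_def rhs_def)
  moreover have "integral {0..R} (\<lambda>x. lhs f (-x)) = integral {-R..0} (lhs f)"
    "integral {0..R} (\<lambda>x. rhs f' (-x)) = integral {-R..0} (rhs f')"
    using Henstock_Kurzweil_Integration.integral_reflect_real[of 0 "-R"] by simp_all
  ultimately have left: "integral {-R..0} (lhs f) \<le> integral {-R..0} (rhs f')"
    by simp
  have w_nonzero: "1 + x\<^sup>2 \<noteq> 0" for x :: real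
    by (metis add_pos_nonneg less_irrefl zero_le_power2 zero_less_one)
  have "lhs f integrable_on {-R..R}" "rhs f' integrable_on {-R..R}"
    using f'_cont DERIV_isCont[OF f] unfolding lhs_def rhs_def
    by (auto intro!: integrable_continuous_interval continuous_at_imp_continuous_on continuous_intros
        simp: continuous_on_eq_continuous_at w_nonzero)
  then have "integral {-R..R} (lhs f) = integral {-R..0} (lhs f) + integral {0..R} (lhs f)"
    "integral {-R..R} (rhs f') = integral {-R..0} (rhs f') + integral {0..R} (rhs f')"
    using R by (simp_all add: Henstock_Kurzweil_Integration.integral_combine)
  with left right show ?thesis
    unfolding lhs_def rhs_def by simp
qed

lemma nn_integral_indicator_eq_integral:
  fixes h :: "real \<Rightarrow> real"
  assumes h_cont: "continuous_on UNIV h" and h_nonneg: "\<And>x. 0 \<le> h x"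
  shows "(\<integral>\<^sup>+x. ennreal (h x * indicator {a..b} x) \<partial>lborel) = ennreal (integral {a..b} h)"
proof -
  have "h integrable_on {a..b}"
    using continuous_on_subset[OF h_cont] by (intro integrable_continuous_interval) auto
  moreover have "(\<lambda>x. h x * indicator {a..b} x) = (\<lambda>x. if x \<in> {a..b} then h x else 0)"
    by (auto simp: indicator_def)
  ultimately have "((\<lambda>x. h x * indicator {a..b} x) has_integral integral {a..b} h) UNIV"
    using has_integral_restrict_UNIV[of "{a..b}" h] integrable_integral by metis
  moreover have "(\<lambda>x. h x * indicator {a..b} x) \<in> borel_measurable lborel"
    using borel_measurable_continuous_onI[OF h_cont] by measurable
  ultimately show ?thesis
    using h_nonneg by (subst nn_integral_has_integral_lborel) auto
qed

lemma nn_integral_mono_of_symmetric_interval_integrals: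
  fixes g h :: "real \<Rightarrow> real"
  assumes g_cont: "continuous_on UNIV g" and h_cont: "continuous_on UNIV h"
    and g_nonneg: "\<And>x. 0 \<le> g x" and h_nonneg: "\<And>x. 0 \<le> h x"
    and le: "\<And>R. 0 \<le> R \<Longrightarrow> integral {-R..R} g \<le> integral {-R..R} h"
  shows "(\<integral>\<^sup>+x. ennreal (g x) \<partial>lborel) \<le> (\<integral>\<^sup>+x. ennreal (h x) \<partial>lborel)"
proof -
  define g_trunc where "g_trunc n x = ennreal (g x * indicator {-real n..real n} x)" for n :: nat and x
  have "ennreal (g x) = (SUP n. g_trunc n x)" for x
  proof (rule antisym)
    have "ennreal (g x) = g_trunc (nat \<lceil>\<bar>x\<bar>\<rceil>) x"
      by (auto simp: g_trunc_def indicator_def) linarith+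
    then show "ennreal (g x) \<le> (SUP n. g_trunc n x)"
      by (metis SUP_upper UNIV_I)
  qed (auto intro!: SUP_least ennreal_leI simp: g_trunc_def indicator_def g_nonneg)
  then have "(\<integral>\<^sup>+x. ennreal (g x) \<partial>lborel) = (\<integral>\<^sup>+x. (SUP n. g_trunc n x) \<partial>lborel)"
    by simp
  also have "\<dots> = (SUP n. \<integral>\<^sup>+x. g_trunc n x \<partial>lborel)"
    using borel_measurable_continuous_onI[OF g_cont]
    by (intro nn_integral_monotone_convergence_SUP)
       (auto simp: g_trunc_def incseq_def le_fun_def indicator_def g_nonneg intro!: ennreal_leI)
  also have "\<dots> \<le> (\<integral>\<^sup>+x. ennreal (h x) \<partial>lborel)"
  proof (rule SUP_least)
    fix n :: nat
    have "(\<integral>\<^sup>+x. g_trunc n x \<partial>lborel) = ennreal (integral {-real n..real n} g)"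
      unfolding g_trunc_def by (rule nn_integral_indicator_eq_integral[OF g_cont g_nonneg])
    also have "\<dots> \<le> ennreal (integral {-real n..real n} h)"
      by (intro ennreal_leI le) simp
    also have "\<dots> = (\<integral>\<^sup>+x. ennreal (h x * indicator {-real n..real n} x) \<partial>lborel)"
      by (rule nn_integral_indicator_eq_integral[OF h_cont h_nonneg, symmetric])
    also have "\<dots> \<le> (\<integral>\<^sup>+x. ennreal (h x) \<partial>lborel)"
      by (intro nn_integral_mono ennreal_leI) (auto simp: indicator_def h_nonneg)
    finally show "(\<integral>\<^sup>+x. g_trunc n x \<partial>lborel) \<le> (\<integral>\<^sup>+x. ennreal (h x) \<partial>lborel)" .
  qed
  finally show ?thesis .
qed

lemma f_beta_weighted_hardy:
  fixes f f' :: "real \<Rightarrow> real" and \<beta> :: real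
  assumes \<beta>: "\<beta> > 1/2"
    and f: "\<And>x. (f has_real_derivative f' x) (at x)"
    and f'_cont: "continuous_on UNIV f'"
    and f0: "f 0 = 0"
  shows "(\<integral>\<^sup>+x. ennreal (f_beta \<beta> x) * ennreal ((f x)\<^sup>2) \<partial>lborel)
       \<le> ennreal (1 / rho \<beta>) * (\<integral>\<^sup>+x. ennreal (f_beta \<beta> x) * ennreal ((1 + x\<^sup>2) * (f' x)\<^sup>2) \<partial>lborel)"
proof -
  define C where "C = C_beta \<beta>"
  define lhs where "lhs x = rho \<beta> * ((1 + x\<^sup>2) powr (-\<beta>) * (f x)\<^sup>2)" for x
  define rhs where "rhs x = (1 + x\<^sup>2) * (1 + x\<^sup>2) powr (-\<beta>) * (f' x)\<^sup>2" for x
  have C_nonneg: "0 \<le> C"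
    unfolding C_def C_beta_def by (simp add: Bochner_Integration.integral_nonneg)
  have rho_pos: "rho \<beta> > 0"
    using rho_pos[OF \<beta>] .
  have w_nonzero: "1 + x\<^sup>2 \<noteq> 0" for x :: real
    by (metis add_pos_nonneg less_irrefl zero_le_power2 zero_less_one)
  have lhs_cont: "continuous_on UNIV lhs" and rhs_cont: "continuous_on UNIV rhs"
    using f'_cont DERIV_isCont[OF f] unfolding lhs_def rhs_def
    by (auto intro!: continuous_at_imp_continuous_on continuous_intros
        simp: continuous_on_eq_continuous_at w_nonzero)
  have "integral {-R..R} lhs \<le> integral {-R..R} rhs" if "0 \<le> R" for R
    unfolding lhs_def rhs_def by (rule weighted_hardy_interval[OF \<beta> that f f'_cont f0])
  then have hardy: "(\<integral>\<^sup>+x. ennreal (lhs x) \<partial>lborel) \<le> (\<integral>\<^sup>+x. ennreal (rhs x) \<partial>lborel)"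
    using rho_pos
    by (intro nn_integral_mono_of_symmetric_interval_integrals[OF lhs_cont rhs_cont])
       (auto simp: lhs_def rhs_def add_nonneg_nonneg)
  have "(\<integral>\<^sup>+x. ennreal (f_beta \<beta> x) * ennreal ((f x)\<^sup>2) \<partial>lborel)
      = (\<integral>\<^sup>+x. ennreal (C / rho \<beta>) * ennreal (lhs x) \<partial>lborel)"
    using rho_pos C_nonneg
    by (intro nn_integral_cong) (simp add: f_beta_def C_def lhs_def ennreal_mult''[symmetric])
  also have "\<dots> = ennreal (C / rho \<beta>) * (\<integral>\<^sup>+x. ennreal (lhs x) \<partial>lborel)"
    using borel_measurable_continuous_onI[OF lhs_cont] by (intro nn_integral_cmult) measurable
  also have "\<dots> \<le> ennreal (C / rho \<beta>) * (\<integral>\<^sup>+x. ennreal (rhs x) \<partial>lborel)"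
    using hardy by (intro mult_left_mono) auto
  also have "\<dots> = ennreal (1 / rho \<beta>) * (ennreal C * (\<integral>\<^sup>+x. ennreal (rhs x) \<partial>lborel))"
    using rho_pos C_nonneg by (simp add: ennreal_mult'[symmetric] mult.assoc[symmetric])
  also have "ennreal C * (\<integral>\<^sup>+x. ennreal (rhs x) \<partial>lborel) = (\<integral>\<^sup>+x. ennreal C * ennreal (rhs x) \<partial>lborel)"
    using borel_measurable_continuous_onI[OF rhs_cont] by (intro nn_integral_cmult[symmetric]) measurable
  also have "\<dots> = (\<integral>\<^sup>+x. ennreal (f_beta \<beta> x) * ennreal ((1 + x\<^sup>2) * (f' x)\<^sup>2) \<partial>lborel)"
    using C_nonneg
    by (intro nn_integral_cong) (simp add: f_beta_def C_def rhs_def ennreal_mult''[symmetric] mult_ac)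
  finally show ?thesis .
qed

lemma (in prob_space) variance_le_nn_integral_sq_diff:
  fixes Y :: "'a \<Rightarrow> real"
  assumes Y: "Y \<in> borel_measurable M" and Y_sq: "integrable M (\<lambda>\<omega>. (Y \<omega>)\<^sup>2)"
  shows "ennreal (variance Y) \<le> (\<integral>\<^sup>+\<omega>. ennreal ((Y \<omega> - c)\<^sup>2) \<partial>M)"
proof -
  have Y_int: "integrable M Y"
    by (rule square_integrable_imp_integrable[OF Y Y_sq])
  have expand: "(\<lambda>\<omega>. (Y \<omega> - c)\<^sup>2) = (\<lambda>\<omega>. (Y \<omega>)\<^sup>2 - 2 * c * Y \<omega> + c\<^sup>2)"
    by (simp add: fun_eq_iff power2_diff)
  have sq_diff_int: "integrable M (\<lambda>\<omega>. (Y \<omega> - c)\<^sup>2)"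
    unfolding expand using Y_int Y_sq by auto
  have "variance Y = expectation (\<lambda>\<omega>. (Y \<omega> - c)\<^sup>2) - (expectation Y - c)\<^sup>2"
    unfolding variance_eq[OF Y_int Y_sq] expand
    using Y_int Y_sq by (simp add: prob_space power2_diff)
  then have "ennreal (variance Y) \<le> ennreal (expectation (\<lambda>\<omega>. (Y \<omega> - c)\<^sup>2))"
    by (intro ennreal_leI) simp
  also have "ennreal (expectation (\<lambda>\<omega>. (Y \<omega> - c)\<^sup>2)) = (\<integral>\<^sup>+\<omega>. ennreal ((Y \<omega> - c)\<^sup>2) \<partial>M)"
    by (rule nn_integral_eq_integral[OF sq_diff_int, symmetric]) simp
  finally show ?thesis .
qed

lemma smooth_fun_has_real_derivative:
  "smooth_fun \<phi> \<Longrightarrow> (\<phi> has_real_derivative deriv \<phi> x) (at x)"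
  unfolding smooth_fun_def by (metis DERIV_deriv_iff_real_differentiable funpow_0)

lemma smooth_fun_continuous_deriv:
  assumes "smooth_fun \<phi>"
  shows "continuous_on UNIV (deriv \<phi>)"
proof -
  have "(deriv ^^ 1) \<phi> differentiable (at x)" for x
    using assms unfolding smooth_fun_def by blast
  then show ?thesis
    by (auto intro!: continuous_at_imp_continuous_on differentiable_imp_continuous_within)
qed

theorem theorem2p2:
  fixes M :: "'a measure" and X :: "'a \<Rightarrow> real" and \<beta> :: real and \<phi> :: "real \<Rightarrow> real"
  assumes "prob_space M"
    and "\<beta> > 1/2"
    and "distributed M lborel X (\<lambda>x. ennreal (f_beta \<beta> x))"
    and "smooth_fun \<phi>"
    and "integrable M (\<lambda>\<omega>. (\<phi> (X \<omega>))\<^sup>2)"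
  shows "ennreal (prob_space.variance M (\<lambda>\<omega>. \<phi> (X \<omega>)))
           \<le> ennreal (1 / rho \<beta>) * (\<integral>\<^sup>+ \<omega>. ennreal ((1 + (X \<omega>)\<^sup>2) * (deriv \<phi> (X \<omega>))\<^sup>2) \<partial>M)"
proof -
  interpret prob_space M by fact
  note X_distr = assms(3)
  have \<phi>_deriv: "\<And>x. (\<phi> has_real_derivative deriv \<phi> x) (at x)"
    using smooth_fun_has_real_derivative[OF assms(4)] .
  have deriv_cont: "continuous_on UNIV (deriv \<phi>)"
    using smooth_fun_continuous_deriv[OF assms(4)] .
  have [measurable]: "\<phi> \<in> borel_measurable borel" "deriv \<phi> \<in> borel_measurable borel"
    using \<phi>_deriv DERIV_isCont deriv_cont
    by (auto intro!: borel_measurable_continuous_onI continuous_at_imp_continuous_on)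
  have [measurable]: "X \<in> borel_measurable M"
    using distributed_measurable[OF X_distr] by simp
  have "ennreal (variance (\<lambda>\<omega>. \<phi> (X \<omega>))) \<le> (\<integral>\<^sup>+\<omega>. ennreal ((\<phi> (X \<omega>) - \<phi> 0)\<^sup>2) \<partial>M)"
    using assms(5) by (intro variance_le_nn_integral_sq_diff) measurable
  also have "\<dots> = (\<integral>\<^sup>+x. ennreal (f_beta \<beta> x) * ennreal ((\<phi> x - \<phi> 0)\<^sup>2) \<partial>lborel)"
    by (rule distributed_nn_integral[OF X_distr, symmetric]) measurable
  also have "\<dots> \<le> ennreal (1 / rho \<beta>) *
      (\<integral>\<^sup>+x. ennreal (f_beta \<beta> x) * ennreal ((1 + x\<^sup>2) * (deriv \<phi> x)\<^sup>2) \<partial>lborel)"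
    using \<phi>_deriv by (intro f_beta_weighted_hardy[OF assms(2) _ deriv_cont])
      (auto intro!: derivative_eq_intros)
  also have "(\<integral>\<^sup>+x. ennreal (f_beta \<beta> x) * ennreal ((1 + x\<^sup>2) * (deriv \<phi> x)\<^sup>2) \<partial>lborel)
      = (\<integral>\<^sup>+\<omega>. ennreal ((1 + (X \<omega>)\<^sup>2) * (deriv \<phi> (X \<omega>))\<^sup>2) \<partial>M)"
    by (rule distributed_nn_integral[OF X_distr]) measurable
  finally show ?thesis .
qed

end
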